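(* Let $\mathcal{C}\subset\mathbb{R}^n$ be closed and Clarke regular, $G:\mathcal{C}\to\mathbb{S}^n_+$ a metric, and $f:\mathbb{R}^n\to\mathbb{R}^n$ a vector field such that $x\mapsto\|f(x)\|_{G(x)}$ is bounded on $\mathcal{C}$. Let $\gamma\ge\sup_{x\in\mathcal{C}}\|f(x)\|_{G(x)}$. Then $x:[0,T]\to\mathcal{C}$ with $T>0$ is a solution of $\dot x=\Pi^G_\mathcal{C}[f](x)$, $x\in\mathcal{C}$, if and only if it is a solution of $$\dot x\in F(x):=f(x)-N^G_x\mathcal{C}\cap\gamma\mathbb{B},\qquad x\in\mathcal{C}.$$
   Context: $\mathbb{B}$ is the closed unit ball; $\mathbb{S}^n_+$ the symmetric positive definite matrices; $\langle u,v\rangle_{G(x)}:=u^TG(x)v$, $\|u\|_{G(x)}:=\langle u,u\rangle_{G(x)}^{1/2}$. Tangent cone: $v\in T_x\mathcal{C}$ iff there are $x_k\to x$ in $\mathcal{C}$ and $\delta_k\to0^+$ with $(x_k-x)/\delta_k\to v$; $\mathcal{C}$ is Clarke regular if $x\mapsto T_x\mathcal{C}$ is inner semicontinuous (then $T_x\mathcal{C}$ is closed convex). $N^G_x\mathcal{C}:=\{\eta:\langle\eta,v\rangle_{G(x)}\le0\ \forall v\in T_x\mathcal{C}\}$. $\Pi^G_\mathcal{C}[f](x):=\arg\min_{v\in T_x\mathcal{C}}\|v-f(x)\|_{G(x)}$ for $x\in\mathcal{C}$. Solutions are Carathéodory: absolutely continuous $x$ with $x(t)\in\mathcal{C}$ and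 the differential equation/inclusion holding for almost all $t\in[0,T]$. *)

theory Defs
  imports "HOL-Analysis.Analysis"
begin

definition tangent_cone :: "('a::real_normed_vector) set \<Rightarrow> 'a \<Rightarrow> 'a set" where
  "tangent_cone C x = {v. \<exists>xs \<delta>. (\<forall>k. xs k \<in> C) \<and> xs \<longlonglongrightarrow> x \<and> (\<forall>k. \<delta> k > (0::real))
       \<and> \<delta> \<longlonglongrightarrow> 0 \<and> (\<lambda>k. (1 / \<delta> k) *\<^sub>R (xs k - x)) \<longlonglongrightarrow> v}"

definition clarke_regular :: "('a::real_normed_vector) set \<Rightarrow> bool" where
  "clarke_regular C \<longleftrightarrow> (\<forall>x\<in>C. \<forall>v\<in>tangent_cone C x. \<forall>xs. (\<forall>k. xs k \<in> C) \<and> xs \<longlonglongrightarrow> x \<longrightarrow>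
       (\<exists>vs. vs \<longlonglongrightarrow> v \<and> (\<forall>\<^sub>F k in sequentially. vs k \<in> tangent_cone C (xs k))))"

definition sym_pos_def :: "real^'n^'n \<Rightarrow> bool" where
  "sym_pos_def M \<longleftrightarrow> transpose M = M \<and> (\<forall>v. v \<noteq> 0 \<longrightarrow> v \<bullet> (M *v v) > 0)"

definition ginner :: "('x \<Rightarrow> real^'n^'n) \<Rightarrow> 'x \<Rightarrow> real^'n \<Rightarrow> real^'n \<Rightarrow> real" where
  "ginner G x u v = u \<bullet> (G x *v v)"

definition gnorm :: "('x \<Rightarrow> real^'n^'n) \<Rightarrow> 'x \<Rightarrow> real^'n \<Rightarrow> real" where
  "gnorm G x u = sqrt (ginner G x u u)"

definition gnormal_cone :: "(real^'n \<Rightarrow> real^'n^'n) \<Rightarrow> (real^'n) set \<Rightarrow> real^'n \<Rightarrow> (real^'n) set" where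
  "gnormal_cone G C x = {\<eta>. \<forall>v\<in>tangent_cone C x. ginner G x \<eta> v \<le> 0}"

definition gproj :: "(real^'n \<Rightarrow> real^'n^'n) \<Rightarrow> (real^'n) set \<Rightarrow> (real^'n \<Rightarrow> real^'n) \<Rightarrow> real^'n \<Rightarrow> (real^'n) set" where
  "gproj G C f x = {v \<in> tangent_cone C x. \<forall>w\<in>tangent_cone C x. gnorm G x (v - f x) \<le> gnorm G x (w - f x)}"

definition abs_cont_on :: "real \<Rightarrow> real \<Rightarrow> (real \<Rightarrow> 'a::real_normed_vector) \<Rightarrow> bool" where
  "abs_cont_on a b x \<longleftrightarrow> (\<forall>\<epsilon>>0. \<exists>\<delta>>0. \<forall>(n::nat) (s::nat \<Rightarrow> real) e.
      (\<forall>i<n. a \<le> s i \<and> s i \<le> e i \<and> e i \<le> b) \<and>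
      (\<forall>i<n. \<forall>j<n. i \<noteq> j \<longrightarrow> e i \<le> s j \<or> e j \<le> s i) \<and>
      (\<Sum>i<n. e i - s i) < \<delta> \<longrightarrow> (\<Sum>i<n. norm (x (e i) - x (s i))) < \<epsilon>)"

definition caratheodory_solution :: "real \<Rightarrow> (real^'n) set \<Rightarrow> (real^'n \<Rightarrow> (real^'n) set) \<Rightarrow> (real \<Rightarrow> real^'n) \<Rightarrow> bool" where
  "caratheodory_solution T C \<Phi> x \<longleftrightarrow> abs_cont_on 0 T x \<and> (\<forall>t\<in>{0..T}. x t \<in> C) \<and>
     (AE t in lebesgue. t \<in> {0..T} \<longrightarrow>
        (\<exists>v. (x has_vector_derivative v) (at t within {0..T}) \<and> v \<in> \<Phi> (x t)))"

end

theory Submission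
  imports Defs
begin

text \<open>
  Wherever a solution x is differentiable at an interior time t, it stays in C on both sides of t,
  so both x'(t) and -x'(t) lie in the tangent cone T of C at x(t). Clarke regularity makes T a convex
  cone: inner semicontinuity lets one follow a tangent direction w from all points near x, and a
  continuation argument along y + s w gives infdist (y + s w) C = o(s) uniformly for y near x, which
  is what closure of T under addition needs. For a velocity v with v and -v in T, v minimises
  the G(x)-distance to f(x) over T iff f(x) - v lies in the G-normal cone; then f(x) - v is
  G-orthogonal to v, so its G-norm is at most that of f(x), hence at most \<gamma>. The two
  inclusions therefore admit the same velocities at almost every time.
\<close>

lemma tangent_coneI:
  assumes "\<And>k. xs k \<in> C" and "\<And>k. \<delta> k > 0" and "\<delta> \<longlonglongrightarrow> 0"
    and "(\<lambda>k. (1 / \<delta> k) *\<^sub>R (xs k - x)) \<longlonglongrightarrow> v"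
  shows "v \<in> tangent_cone C x"
proof -
  have "(\<lambda>k. x + \<delta> k *\<^sub>R ((1 / \<delta> k) *\<^sub>R (xs k - x))) \<longlonglongrightarrow> x + 0 *\<^sub>R v"
    by (intro tendsto_intros assms)
  moreover have "x + \<delta> k *\<^sub>R ((1 / \<delta> k) *\<^sub>R (xs k - x)) = xs k" for k
    using assms(2)[of k] by simp
  ultimately have "xs \<longlonglongrightarrow> x"
    by simp
  with assms show ?thesis
    unfolding tangent_cone_def by blast
qed

lemma zero_in_tangent_cone:
  assumes "x \<in> C"
  shows "0 \<in> tangent_cone C x"
  using assms LIMSEQ_inverse_real_of_nat
  by (intro tangent_coneI[where xs = "\<lambda>k. x" and \<delta> = "\<lambda>k. inverse (real (Suc k))"]) auto

lemma tangent_cone_scaleR: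
  assumes "x \<in> C" and v: "v \<in> tangent_cone C x" and "c \<ge> 0"
  shows "c *\<^sub>R v \<in> tangent_cone C x"
proof (cases "c = 0")
  case True
  with assms show ?thesis
    by (simp add: zero_in_tangent_cone)
next
  case False
  with assms have c: "c > 0"
    by simp
  from v obtain xs \<delta> where xs: "\<forall>k. xs k \<in> C" and \<delta>: "\<forall>k. \<delta> k > 0" "\<delta> \<longlonglongrightarrow> 0"
    and quot: "(\<lambda>k. (1 / \<delta> k) *\<^sub>R (xs k - x)) \<longlonglongrightarrow> v"
    unfolding tangent_cone_def by blast
  have "(\<lambda>k. \<delta> k / c) \<longlonglongrightarrow> 0 / c"
    using c by (intro tendsto_intros \<delta>) auto
  moreover have "(\<lambda>k. c *\<^sub>R ((1 / \<delta> k) *\<^sub>R (xs k - x))) \<longlonglongrightarrow> c *\<^sub>R v"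
    by (intro tendsto_intros quot)
  ultimately show ?thesis
    using xs \<delta> c by (intro tangent_coneI[where \<delta> = "\<lambda>k. \<delta> k / c"]) auto
qed

lemma right_derivative_in_tangent_cone:
  fixes x :: "real \<Rightarrow> 'a::real_normed_vector"
  assumes der: "(x has_vector_derivative v) (at_right t)"
    and inC: "\<forall>\<^sub>F s in at_right t. x s \<in> C"
  shows "v \<in> tangent_cone C (x t)"
proof -
  obtain b where "b > t" and b: "\<And>s. t < s \<Longrightarrow> s < b \<Longrightarrow> x s \<in> C"
    using inC by (auto simp: eventually_at_right_field)
  define \<delta> where "\<delta> = (\<lambda>k. (b - t) / real (Suc (Suc k)))"
  have \<delta>: "\<delta> k > 0" "t + \<delta> k < b" for k
  proof -
    show "\<delta> k > 0"
      using \<open>b > t\<close> by (simp add: \<delta>_def)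
    have "\<delta> k \<le> (b - t) / 2"
      using \<open>b > t\<close> unfolding \<delta>_def by (intro divide_left_mono) auto
    then show "t + \<delta> k < b"
      using \<open>b > t\<close> by simp
  qed
  have "(\<lambda>k. (b - t) * inverse (real (Suc (Suc k)))) \<longlonglongrightarrow> (b - t) * 0"
    by (intro tendsto_intros LIMSEQ_inverse_real_of_nat LIMSEQ_Suc)
  then have "\<delta> \<longlonglongrightarrow> 0"
    by (simp add: \<delta>_def divide_inverse)
  then have "(\<lambda>k. t + \<delta> k) \<longlonglongrightarrow> t + 0"
    by (intro tendsto_intros)
  then have "filterlim (\<lambda>k. t + \<delta> k) (at_right t) sequentially"
    using \<delta>(1) by (auto simp: filterlim_at intro!: always_eventually less_imp_neq[symmetric])
  moreover have "((\<lambda>s. (1 / (s - t)) *\<^sub>R (x s - x t)) \<longlongrightarrow> v) (at_right t)"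
  proof -
    have "((\<lambda>s. ((x s - x t) - (s - t) *\<^sub>R v) /\<^sub>R norm (s - t)) \<longlongrightarrow> 0) (at_right t)"
      using der by (simp add: has_vector_derivative_def has_derivative_at_within)
    moreover have "((x s - x t) - (s - t) *\<^sub>R v) /\<^sub>R norm (s - t) = (1 / (s - t)) *\<^sub>R (x s - x t) - v"
      if "s > t" for s
      using that by (simp add: scaleR_diff_right divide_inverse_commute)
    then have "\<forall>\<^sub>F s in at_right t.
        ((x s - x t) - (s - t) *\<^sub>R v) /\<^sub>R norm (s - t) = (1 / (s - t)) *\<^sub>R (x s - x t) - v"
      by (auto simp: eventually_at_filter)
    ultimately have "((\<lambda>s. (1 / (s - t)) *\<^sub>R (x s - x t) - v) \<longlongrightarrow> 0) (at_right t)"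
      by (rule Lim_transform_eventually)
    then show ?thesis
      by (rule LIM_zero_iff[THEN iffD1])
  qed
  ultimately have "(\<lambda>k. (1 / (t + \<delta> k - t)) *\<^sub>R (x (t + \<delta> k) - x t)) \<longlonglongrightarrow> v"
    by (rule filterlim_compose[rotated])
  then have "(\<lambda>k. (1 / \<delta> k) *\<^sub>R (x (t + \<delta> k) - x t)) \<longlonglongrightarrow> v"
    by simp
  then show ?thesis
    using \<delta> b \<open>b > t\<close> \<open>\<delta> \<longlonglongrightarrow> 0\<close>
    by (intro tangent_coneI[where xs = "\<lambda>k. x (t + \<delta> k)"]) auto
qed

lemma derivative_in_tangent_cone:
  fixes x :: "real \<Rightarrow> 'a::real_normed_vector"
  assumes der: "(x has_vector_derivative v) (at t)"
    and inC: "\<forall>\<^sub>F s in at t. x s \<in> C"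
  shows "v \<in> tangent_cone C (x t)" and "- v \<in> tangent_cone C (x t)"
proof -
  show "v \<in> tangent_cone C (x t)"
    using der inC unfolding eventually_at_split
    by (blast intro: right_derivative_in_tangent_cone has_vector_derivative_at_within)
  have "((x \<circ> uminus) has_vector_derivative (- 1) *\<^sub>R v) (at (- t))"
    by (rule vector_diff_chain_at) (use der in \<open>auto intro: derivative_eq_intros\<close>)
  moreover have "\<forall>\<^sub>F s in at (- t). (x \<circ> uminus) s \<in> C"
    using inC unfolding filtermap_at_minus[symmetric] eventually_filtermap by simp
  ultimately have "(- 1) *\<^sub>R v \<in> tangent_cone C ((x \<circ> uminus) (- t))"
    unfolding eventually_at_split
    by (blast intro: right_derivative_in_tangent_cone has_vector_derivative_at_within)
  then show "- v \<in> tangent_cone C (x t)"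
    by simp
qed

lemma clarke_regular_tangent_cone_near:
  assumes "clarke_regular C" and "x \<in> C" and "w \<in> tangent_cone C x" and "e > 0"
  shows "\<exists>r>0. \<forall>y\<in>C. dist y x < r \<longrightarrow> (\<exists>u\<in>tangent_cone C y. dist u w < e)"
proof (rule ccontr)
  assume "\<not> ?thesis"
  then have "\<forall>k. \<exists>y\<in>C. dist y x < inverse (real (Suc k)) \<and> (\<forall>u\<in>tangent_cone C y. dist u w \<ge> e)"
    by (metis not_le of_nat_0_less_iff positive_imp_inverse_positive zero_less_Suc)
  then obtain ys where ys: "\<And>k. ys k \<in> C" "\<And>k. dist (ys k) x < inverse (real (Suc k))"
    and far: "\<And>k u. u \<in> tangent_cone C (ys k) \<Longrightarrow> dist u w \<ge> e"
    by metis
  have "(\<lambda>k. dist (ys k) x) \<longlonglongrightarrow> 0"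
    by (rule tendsto_sandwich[OF _ _ tendsto_const LIMSEQ_inverse_real_of_nat])
       (use ys(2) in \<open>auto intro!: always_eventually less_imp_le simp del: of_nat_Suc\<close>)
  then have "ys \<longlonglongrightarrow> x"
    using tendsto_dist_iff by blast
  with assms ys(1) obtain us where "us \<longlonglongrightarrow> w" and us: "\<forall>\<^sub>F k in sequentially. us k \<in> tangent_cone C (ys k)"
    unfolding clarke_regular_def by blast
  then have "\<forall>\<^sub>F k in sequentially. dist (us k) w < e"
    using \<open>e > 0\<close> by (blast intro: tendstoD)
  with us have "\<forall>\<^sub>F k in sequentially. False"
    by eventually_elim (use far in force)
  then show False
    by simp
qed

lemma infdist_step_along_tangent:
  assumes "u \<in> tangent_cone C p" and "norm (w - u) < e" and "\<eta> > 0"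
  shows "\<exists>d. 0 < d \<and> d < \<eta> \<and> infdist (z + d *\<^sub>R w) C \<le> dist z p + e * d"
proof -
  from assms(1) obtain qs \<delta> where qs: "\<forall>k. qs k \<in> C" and \<delta>: "\<forall>k. \<delta> k > 0" "\<delta> \<longlonglongrightarrow> 0"
    and quot: "(\<lambda>k. (1 / \<delta> k) *\<^sub>R (qs k - p)) \<longlonglongrightarrow> u"
    unfolding tangent_cone_def by blast
  have "\<forall>\<^sub>F k in sequentially. \<delta> k < \<eta>"
    using \<delta>(2) \<open>\<eta> > 0\<close> by (rule order_tendstoD)
  moreover have "\<forall>\<^sub>F k in sequentially. dist ((1 / \<delta> k) *\<^sub>R (qs k - p)) u < e - norm (w - u)"
    using quot assms(2) by (intro tendstoD) auto
  ultimately obtain k where k: "\<delta> k < \<eta>" "norm ((1 / \<delta> k) *\<^sub>R (qs k - p) - u) < e - norm (w - u)"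
    unfolding dist_norm using eventually_happens'[OF _ eventually_conj] by force
  define d where "d = \<delta> k"
  have "d > 0"
    using \<delta>(1) by (simp add: d_def)
  have "z + d *\<^sub>R w - qs k = (z - p) + d *\<^sub>R (w - u) - d *\<^sub>R ((1 / d) *\<^sub>R (qs k - p) - u)"
    using \<open>d > 0\<close> by (simp add: algebra_simps)
  then have "norm (z + d *\<^sub>R w - qs k)
      \<le> norm (z - p) + norm (d *\<^sub>R (w - u)) + norm (d *\<^sub>R ((1 / d) *\<^sub>R (qs k - p) - u))"
    by (metis norm_triangle_ineq4 norm_triangle_ineq add_right_mono order_trans)
  also have "\<dots> = dist z p + d * (norm (w - u) + norm ((1 / d) *\<^sub>R (qs k - p) - u))"
    using \<open>d > 0\<close> by (simp add: dist_norm distrib_left)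
  also have "\<dots> \<le> dist z p + e * d"
    using k(2) \<open>d > 0\<close> by (simp add: d_def mult.commute)
  finally show ?thesis
    using infdist_le[OF qs[rule_format], of "z + d *\<^sub>R w" k] k(1) \<open>d > 0\<close>
    by (intro exI[of _ d]) (auto simp: d_def dist_norm)
qed

lemma closed_real_set_continuation:
  fixes a b :: real
  assumes "closed S" and "a \<in> S" and "a \<le> b"
    and step: "\<And>m. m \<in> S \<Longrightarrow> a \<le> m \<Longrightarrow> m < b \<Longrightarrow> \<exists>m'\<in>S. m < m' \<and> m' \<le> b"
  shows "b \<in> S"
proof -
  define m where "m = Sup (S \<inter> {a..b})"
  have bdd: "bdd_above (S \<inter> {a..b})"
    by auto
  have "m \<in> S \<inter> {a..b}"
    unfolding m_def using assms by (intro closed_contains_Sup bdd) auto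
  moreover have "\<not> m < b"
  proof
    assume "m < b"
    with step \<open>m \<in> S \<inter> {a..b}\<close> obtain m' where "m' \<in> S \<inter> {a..b}" "m < m'"
      by fastforce
    then show False
      using cSup_upper[OF _ bdd] by (fastforce simp: m_def)
  qed
  ultimately show ?thesis
    by auto
qed

lemma clarke_regular_infdist_le:
  fixes C :: "'a::euclidean_space set"
  assumes "closed C" and "clarke_regular C" and "x \<in> C" and "w \<in> tangent_cone C x" and "e > 0"
  shows "\<exists>r>0. \<forall>y\<in>C. \<forall>\<tau>. dist y x < r \<longrightarrow> 0 \<le> \<tau> \<longrightarrow> \<tau> < r \<longrightarrow> infdist (y + \<tau> *\<^sub>R w) C \<le> e * \<tau>"
proof -
  obtain \<rho> where "\<rho> > 0"
    and near: "\<And>p. p \<in> C \<Longrightarrow> dist p x < \<rho> \<Longrightarrow> \<exists>u\<in>tangent_cone C p. dist u w < e"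
    using clarke_regular_tangent_cone_near[OF assms(2-5)] by blast
  \<comment> \<open>Small enough that every point of C nearest to some y + m w, with m < r, lies within \<rho> of x.\<close>
  define r where "r = \<rho> / (2 * norm w + 1)"
  have "2 * norm w + 1 > 0"
    by (simp add: add_nonneg_pos)
  then have "r > 0" and r: "r * (2 * norm w + 1) = \<rho>"
    using \<open>\<rho> > 0\<close> by (simp_all add: r_def)
  have "infdist (y + \<tau> *\<^sub>R w) C \<le> e * \<tau>"
    if "y \<in> C" and "dist y x < r" and "0 \<le> \<tau>" and "\<tau> < r" for y \<tau>
  proof -
    have "\<tau> \<in> {s. infdist (y + s *\<^sub>R w) C \<le> e * s}"
    proof (rule closed_real_set_continuation[where a = 0])
      show "closed {s. infdist (y + s *\<^sub>R w) C \<le> e * s}"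
        by (intro closed_Collect_le continuous_intros)
    next
      fix m assume m: "m \<in> {s. infdist (y + s *\<^sub>R w) C \<le> e * s}" "0 \<le> m" "m < \<tau>"
      define z where "z = y + m *\<^sub>R w"
      obtain p where "p \<in> C" and p: "infdist z C = dist z p"
        using infdist_attains_inf[OF \<open>closed C\<close>] \<open>y \<in> C\<close> by blast
      have "dist z p \<le> m * norm w"
        using p infdist_le[OF \<open>y \<in> C\<close>, of z] \<open>0 \<le> m\<close> by (simp add: z_def dist_norm)
      moreover have "dist p x \<le> dist z p + dist z y + dist y x"
        by (metis dist_commute dist_triangle add_right_mono order_trans)
      moreover have "m * norm w \<le> r * norm w"
        using m \<open>\<tau> < r\<close> by (intro mult_right_mono) auto
      ultimately have "dist p x < \<rho>"
        using \<open>dist y x < r\<close> \<open>0 \<le> m\<close> r by (simp add: z_def dist_norm algebra_simps)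
      then obtain u where "u \<in> tangent_cone C p" "norm (w - u) < e"
        using near[OF \<open>p \<in> C\<close>] by (auto simp: dist_norm norm_minus_commute)
      then obtain d where d: "0 < d" "d < \<tau> - m" and "infdist (z + d *\<^sub>R w) C \<le> dist z p + e * d"
        using infdist_step_along_tangent[of u C p w e "\<tau> - m" z] m by auto
      then have "infdist (y + (m + d) *\<^sub>R w) C \<le> e * (m + d)"
        using m p by (simp add: z_def algebra_simps)
      with d show "\<exists>m'\<in>{s. infdist (y + s *\<^sub>R w) C \<le> e * s}. m < m' \<and> m' \<le> \<tau>"
        by (intro bexI[of _ "m + d"]) auto
    qed (use \<open>y \<in> C\<close> \<open>0 \<le> \<tau>\<close> in auto)
    then show ?thesis
      by simp
  qed
  with \<open>r > 0\<close> show ?thesis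
    by blast
qed

lemma tangent_cone_add:
  fixes C :: "'a::euclidean_space set"
  assumes "closed C" and "clarke_regular C" and "x \<in> C"
    and v: "v \<in> tangent_cone C x" and w: "w \<in> tangent_cone C x"
  shows "v + w \<in> tangent_cone C x"
proof -
  from v obtain xs \<delta> where xs: "\<forall>k. xs k \<in> C" "xs \<longlonglongrightarrow> x" and \<delta>: "\<forall>k. \<delta> k > 0" "\<delta> \<longlonglongrightarrow> 0"
    and quot: "(\<lambda>k. (1 / \<delta> k) *\<^sub>R (xs k - x)) \<longlonglongrightarrow> v"
    unfolding tangent_cone_def by blast
  have "\<forall>k. \<exists>p. p \<in> C \<and> infdist (xs k + \<delta> k *\<^sub>R w) C = dist (xs k + \<delta> k *\<^sub>R w) p"
    using infdist_attains_inf[OF \<open>closed C\<close>] \<open>x \<in> C\<close> by blast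
  then obtain q where q: "\<And>k. q k \<in> C" "\<And>k. infdist (xs k + \<delta> k *\<^sub>R w) C = dist (xs k + \<delta> k *\<^sub>R w) (q k)"
    by metis
  define err where "err k = (1 / \<delta> k) *\<^sub>R (q k - (xs k + \<delta> k *\<^sub>R w))" for k
  have "err \<longlonglongrightarrow> 0"
  proof (rule tendsto_iff[THEN iffD2], intro allI impI)
    fix e :: real assume "e > 0"
    then obtain r where "r > 0" and r: "\<And>y \<tau>. y \<in> C \<Longrightarrow> dist y x < r \<Longrightarrow> 0 \<le> \<tau> \<Longrightarrow> \<tau> < r
        \<Longrightarrow> infdist (y + \<tau> *\<^sub>R w) C \<le> (e / 2) * \<tau>"
      using clarke_regular_infdist_le[OF assms(1-3) w, of "e / 2"] by auto
    have "\<forall>\<^sub>F k in sequentially. dist (xs k) x < r \<and> \<delta> k < r"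
      using tendstoD[OF xs(2) \<open>r > 0\<close>] order_tendstoD(2)[OF \<delta>(2) \<open>r > 0\<close>] by eventually_elim simp
    then show "\<forall>\<^sub>F k in sequentially. dist (err k) 0 < e"
    proof eventually_elim
      case (elim k)
      then have "dist (xs k + \<delta> k *\<^sub>R w) (q k) \<le> (e / 2) * \<delta> k"
        using r[of "xs k" "\<delta> k"] xs(1) \<delta>(1) q(2) by (simp add: less_imp_le)
      moreover have "norm (err k) = dist (xs k + \<delta> k *\<^sub>R w) (q k) / \<delta> k"
        using \<delta>(1)[rule_format, of k] by (simp add: err_def dist_norm norm_minus_commute)
      ultimately have "norm (err k) \<le> e / 2"
        using \<delta>(1) by (simp add: divide_le_eq)
      then show ?case
        using \<open>e > 0\<close> by simp
    qed
  qed
  then have "(\<lambda>k. (1 / \<delta> k) *\<^sub>R (xs k - x) + w + err k) \<longlonglongrightarrow> v + w + 0"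
    by (intro tendsto_intros quot)
  moreover have "(1 / \<delta> k) *\<^sub>R (xs k - x) + w + err k = (1 / \<delta> k) *\<^sub>R (q k - x)" for k
    using \<delta>(1)[rule_format, of k] by (simp add: err_def algebra_simps)
  ultimately show ?thesis
    using q(1) \<delta> by (intro tangent_coneI[where xs = q]) auto
qed

lemma ginner_add_left: "ginner G y (a + b) c = ginner G y a c + ginner G y b c"
  by (simp add: ginner_def inner_add_left)

lemma ginner_add_right: "ginner G y c (a + b) = ginner G y c a + ginner G y c b"
  by (simp add: ginner_def matrix_vector_right_distrib inner_add_right)

lemma ginner_diff_left: "ginner G y (a - b) c = ginner G y a c - ginner G y b c"
  by (simp add: ginner_def inner_diff_left)

lemma ginner_diff_right: "ginner G y c (a - b) = ginner G y c a - ginner G y c b"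
  by (simp add: ginner_def matrix_vector_mult_diff_distrib inner_diff_right)

lemma ginner_scaleR_left: "ginner G y (k *\<^sub>R a) c = k * ginner G y a c"
  by (simp add: ginner_def)

lemma ginner_scaleR_right: "ginner G y c (k *\<^sub>R a) = k * ginner G y c a"
  by (simp add: ginner_def matrix_vector_mult_scaleR)

lemma ginner_minus_left: "ginner G y (- a) c = - ginner G y a c"
  by (simp add: ginner_def)

lemma ginner_minus_right: "ginner G y c (- a) = - ginner G y c a"
  using ginner_scaleR_right[of G y c "- 1" a] by simp

lemmas ginner_simps = ginner_add_left ginner_add_right ginner_diff_left ginner_diff_right
  ginner_scaleR_left ginner_scaleR_right ginner_minus_left ginner_minus_right

lemma ginner_commute:
  assumes "sym_pos_def (G y)"
  shows "ginner G y u w = ginner G y w u"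
proof -
  have "ginner G y u w = (u v* G y) \<bullet> w"
    by (simp add: ginner_def dot_lmul_matrix)
  also have "u v* G y = G y *v u"
    using vector_transpose_matrix[of u "G y"] assms unfolding sym_pos_def_def by simp
  finally show ?thesis
    by (simp add: ginner_def inner_commute)
qed

lemma ginner_self_nonneg: "sym_pos_def (G y) \<Longrightarrow> 0 \<le> ginner G y a a"
  unfolding sym_pos_def_def ginner_def by (cases "a = 0") (auto intro: less_imp_le)

lemma ginner_add_scaleR_self:
  assumes "sym_pos_def (G y)"
  shows "ginner G y (a + c *\<^sub>R b) (a + c *\<^sub>R b)
    = ginner G y a a + 2 * c * ginner G y a b + c\<^sup>2 * ginner G y b b"
  using ginner_commute[of G y, OF assms, of a b]
  by (simp add: ginner_simps power2_eq_square algebra_simps)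

lemma nonneg_if_nonneg_add_pos_mult:
  fixes a b :: real
  assumes "\<And>c. c > 0 \<Longrightarrow> 0 \<le> b + c * a"
  shows "0 \<le> b"
proof (rule tendsto_lowerbound)
  show "((\<lambda>c. b + c * a) \<longlongrightarrow> b) (at_right 0)"
    by (rule tendsto_eq_intros refl)+ simp
  show "\<forall>\<^sub>F c in at_right 0. 0 \<le> b + c * a"
    using assms by (auto simp: eventually_at_filter)
qed simp

lemma gnormal_cone_orthogonal:
  assumes "\<eta> \<in> gnormal_cone G C y" and "v \<in> tangent_cone C y" and "- v \<in> tangent_cone C y"
  shows "ginner G y \<eta> v = 0"
proof -
  have "ginner G y \<eta> v \<le> 0" and "ginner G y \<eta> (- v) \<le> 0"
    using assms unfolding gnormal_cone_def by blast+
  then show ?thesis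
    by (simp add: ginner_minus_right)
qed

lemma gproj_imp_gnormal_cone:
  assumes G: "sym_pos_def (G y)" and v: "v \<in> gproj G C f y"
    and shift: "\<And>w c. w \<in> tangent_cone C y \<Longrightarrow> 0 < c \<Longrightarrow> v + c *\<^sub>R w \<in> tangent_cone C y"
  shows "f y - v \<in> gnormal_cone G C y"
  unfolding gnormal_cone_def
proof (intro CollectI ballI)
  fix w assume w: "w \<in> tangent_cone C y"
  have "0 \<le> 2 * ginner G y (v - f y) w + c * ginner G y w w" if "c > 0" for c
  proof -
    have "ginner G y (v - f y) (v - f y) \<le> ginner G y ((v - f y) + c *\<^sub>R w) ((v - f y) + c *\<^sub>R w)"
      using v shift[OF w that] by (simp add: gproj_def gnorm_def algebra_simps)
    then have "0 \<le> c * (2 * ginner G y (v - f y) w + c * ginner G y w w)"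
      unfolding ginner_add_scaleR_self[of G y, OF G] by (simp add: power2_eq_square algebra_simps)
    with that show ?thesis
      by (simp add: zero_le_mult_iff)
  qed
  then have "0 \<le> 2 * ginner G y (v - f y) w"
    by (rule nonneg_if_nonneg_add_pos_mult)
  then show "ginner G y (f y - v) w \<le> 0"
    by (simp add: ginner_simps)
qed

lemma gnormal_cone_imp_gproj:
  assumes G: "sym_pos_def (G y)" and v: "v \<in> tangent_cone C y" "- v \<in> tangent_cone C y"
    and normal: "f y - v \<in> gnormal_cone G C y"
  shows "v \<in> gproj G C f y"
proof -
  have "ginner G y (v - f y) (v - f y) \<le> ginner G y (w - f y) (w - f y)"
    if w: "w \<in> tangent_cone C y" for w
  proof -
    have "ginner G y (w - f y) (w - f y) = ginner G y ((v - f y) + 1 *\<^sub>R (w - v)) ((v - f y) + 1 *\<^sub>R (w - v))"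
      by (simp add: algebra_simps)
    also have "\<dots> = ginner G y (v - f y) (v - f y) + 2 * ginner G y (v - f y) (w - v) + ginner G y (w - v) (w - v)"
      unfolding ginner_add_scaleR_self[of G y, OF G] by simp
    also have "ginner G y (v - f y) (w - v) = - ginner G y (f y - v) w"
      using gnormal_cone_orthogonal[OF normal v] by (simp add: ginner_simps)
    finally show ?thesis
      using normal w ginner_self_nonneg[of G y "w - v", OF G] by (force simp: gnormal_cone_def)
  qed
  with v show ?thesis
    by (simp add: gproj_def gnorm_def)
qed

lemma gnorm_le_of_gnormal_cone:
  assumes G: "sym_pos_def (G y)" and v: "v \<in> tangent_cone C y" "- v \<in> tangent_cone C y"
    and normal: "f y - v \<in> gnormal_cone G C y"
  shows "gnorm G y (f y - v) \<le> gnorm G y (f y)"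
proof -
  have "ginner G y (f y) (f y) = ginner G y ((f y - v) + 1 *\<^sub>R v) ((f y - v) + 1 *\<^sub>R v)"
    by simp
  also have "\<dots> = ginner G y (f y - v) (f y - v) + ginner G y v v"
    unfolding ginner_add_scaleR_self[of G y, OF G] gnormal_cone_orthogonal[OF normal v] by simp
  finally show ?thesis
    using ginner_self_nonneg[of G y v, OF G] by (simp add: gnorm_def)
qed

lemma gproj_iff_bounded_gnormal_cone:
  assumes G: "sym_pos_def (G y)"
    and cone: "\<And>w c. w \<in> tangent_cone C y \<Longrightarrow> 0 \<le> c \<Longrightarrow> c *\<^sub>R w \<in> tangent_cone C y"
    and add: "\<And>u w. u \<in> tangent_cone C y \<Longrightarrow> w \<in> tangent_cone C y \<Longrightarrow> u + w \<in> tangent_cone C y"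
    and v: "v \<in> tangent_cone C y" "- v \<in> tangent_cone C y"
    and f: "gnorm G y (f y) \<le> \<gamma>"
  shows "v \<in> gproj G C f y \<longleftrightarrow> v \<in> {f y - \<eta> | \<eta>. \<eta> \<in> gnormal_cone G C y \<and> gnorm G y \<eta> \<le> \<gamma>}"
proof
  assume "v \<in> gproj G C f y"
  then have normal: "f y - v \<in> gnormal_cone G C y"
    using cone add v by (intro gproj_imp_gnormal_cone[of G y, OF G]) auto
  with f gnorm_le_of_gnormal_cone[of G y v C f, OF G v normal]
  show "v \<in> {f y - \<eta> | \<eta>. \<eta> \<in> gnormal_cone G C y \<and> gnorm G y \<eta> \<le> \<gamma>}"
    by force
next
  assume "v \<in> {f y - \<eta> | \<eta>. \<eta> \<in> gnormal_cone G C y \<and> gnorm G y \<eta> \<le> \<gamma>}"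
  then have "f y - v \<in> gnormal_cone G C y"
    by auto
  then show "v \<in> gproj G C f y"
    by (rule gnormal_cone_imp_gproj[of G y v C f, OF G v])
qed

lemma caratheodory_solution_cong:
  assumes "\<And>t v. \<forall>s\<in>{0..T}. x s \<in> C \<Longrightarrow> 0 < t \<Longrightarrow> t < T \<Longrightarrow> (x has_vector_derivative v) (at t)
      \<Longrightarrow> v \<in> \<Phi> (x t) \<longleftrightarrow> v \<in> \<Psi> (x t)"
  shows "caratheodory_solution T C \<Phi> x \<longleftrightarrow> caratheodory_solution T C \<Psi> x"
proof -
  have "(AE t in lebesgue. t \<in> {0..T} \<longrightarrow> (\<exists>v. (x has_vector_derivative v) (at t within {0..T}) \<and> v \<in> \<Phi> (x t)))
      \<longleftrightarrow> (AE t in lebesgue. t \<in> {0..T} \<longrightarrow> (\<exists>v. (x has_vector_derivative v) (at t within {0..T}) \<and> v \<in> \<Psi> (x t)))"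
    if inC: "\<forall>s\<in>{0..T}. x s \<in> C"
  proof (rule eventually_subst)
    have "AE t in lebesgue. t \<notin> {0, T}"
      unfolding eventually_ae_filter_negligible by (auto intro!: exI[of _ "{0, T}"] negligible_finite)
    then show "AE t in lebesgue. (t \<in> {0..T} \<longrightarrow> (\<exists>v. (x has_vector_derivative v) (at t within {0..T}) \<and> v \<in> \<Phi> (x t)))
        = (t \<in> {0..T} \<longrightarrow> (\<exists>v. (x has_vector_derivative v) (at t within {0..T}) \<and> v \<in> \<Psi> (x t)))"
    proof eventually_elim
      case (elim t)
      then have "t \<in> {0..T} \<longleftrightarrow> 0 < t \<and> t < T"
        by auto
      then show ?case
        using assms[OF inC] at_within_Icc_at[of 0 t T] by auto
    qed
  qed
  then show ?thesis
    unfolding caratheodory_solution_def by blast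
qed

theorem proposition2p11:
  fixes C :: "(real^'n) set" and G :: "real^'n \<Rightarrow> real^'n^'n"
    and f :: "real^'n \<Rightarrow> real^'n" and \<gamma> T :: real and x :: "real \<Rightarrow> real^'n"
  assumes "closed C" and "clarke_regular C"
    and "\<forall>y\<in>C. sym_pos_def (G y)"
    and "bdd_above ((\<lambda>y. gnorm G y (f y)) ` C)"
    and "\<forall>y\<in>C. gnorm G y (f y) \<le> \<gamma>"
    and "T > 0"
  shows "caratheodory_solution T C (gproj G C f) x \<longleftrightarrow>
         caratheodory_solution T C
           (\<lambda>y. {f y - \<eta> | \<eta>. \<eta> \<in> gnormal_cone G C y \<and> gnorm G y \<eta> \<le> \<gamma>}) x"
proof (rule caratheodory_solution_cong)
  fix t v
  assume inC: "\<forall>s\<in>{0..T}. x s \<in> C" and "0 < t" "t < T" and der: "(x has_vector_derivative v) (at t)"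
  then have "x t \<in> C"
    by auto
  have "\<forall>\<^sub>F s in at t. x s \<in> C"
    using eventually_at_in_open'[of "{0<..<T}" t] \<open>0 < t\<close> \<open>t < T\<close> inC
    by (auto elim: eventually_mono)
  with der have "v \<in> tangent_cone C (x t)" "- v \<in> tangent_cone C (x t)"
    by (blast intro: derivative_in_tangent_cone)+
  with assms \<open>x t \<in> C\<close> show "v \<in> gproj G C f (x t) \<longleftrightarrow>
      v \<in> {f (x t) - \<eta> | \<eta>. \<eta> \<in> gnormal_cone G C (x t) \<and> gnorm G (x t) \<eta> \<le> \<gamma>}"
    by (intro gproj_iff_bounded_gnormal_cone tangent_cone_scaleR tangent_cone_add) auto
qed

end
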